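(* If $S,T\in \mathcal{B}_{A}(\mathcal{H})$, then $$d\omega _{A_{0}}\left( \begin{bmatrix} S & 0 \\ 0 & T \end{bmatrix} \right) =\max \left\{ d\omega _{A}\left( S\right) ,d\omega _{A}\left( T\right) \right\}.$$
   Context: $\mathcal{H}$ is a complex Hilbert space and $A\in\mathcal{B}(\mathcal{H})$ is a positive operator; $\langle x,z\rangle_A=\langle Ax,z\rangle$ and $\|z\|_A=\|A^{1/2}z\|$. $\mathcal{B}_A(\mathcal{H})$ denotes the set of bounded operators $S$ on $\mathcal{H}$ admitting an $A$-adjoint, i.e. with $\mathcal{R}(S^*A)\subseteq\mathcal{R}(A)$. The $A$-Davis-Wielandt radius is $d\omega_A(S)=\sup\{(|\langle Sz,z\rangle_A|^2+\|Sz\|_A^4)^{1/2}: z\in\mathcal{H},\ \|z\|_A=1\}$. $A_0=\begin{bmatrix} A&0\\0&A\end{bmatrix}$ is the positive operator on $\mathcal{H}\oplus\mathcal{H}$, inducing $\langle x,z\rangle_{A_0}=\langle x_1,z_1\rangle_A+\langle x_2,z_2\rangle_A$ for $x=(x_1,x_2)$, $z=(z_1,z_2)$, and $d\omega_{A_0}$ is the corresponding $A_0$-Davis-Wielandt radius on $\mathcal{H}\oplus\mathcal{H}$. *)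

theory Defs
  imports "HOL-Analysis.Analysis"
begin

text \<open>The inner product is linear in the first argument.\<close>

class complex_vector_space = real_vector +
  fixes scaleC :: "complex \<Rightarrow> 'a \<Rightarrow> 'a" (infixr "*\<^sub>C" 75)
  assumes scaleC_add_right: "a *\<^sub>C (x + y) = a *\<^sub>C x + a *\<^sub>C y"
    and scaleC_add_left: "(a + b) *\<^sub>C x = a *\<^sub>C x + b *\<^sub>C x"
    and scaleC_scaleC: "a *\<^sub>C (b *\<^sub>C x) = (a * b) *\<^sub>C x"
    and scaleC_one: "1 *\<^sub>C x = x"
    and scaleC_of_real: "complex_of_real r *\<^sub>C x = r *\<^sub>R x"

class complex_inner = complex_vector_space + real_normed_vector +
  fixes cinner :: "'a \<Rightarrow> 'a \<Rightarrow> complex"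
  assumes cinner_commute: "cinner x y = cnj (cinner y x)"
    and cinner_add_left: "cinner (x + y) z = cinner x z + cinner y z"
    and cinner_scaleC_left: "cinner (a *\<^sub>C x) y = a * cinner x y"
    and cinner_self_norm: "cinner x x = complex_of_real ((norm x)\<^sup>2)"

class complex_hilbert = complex_inner + complete_space

definition bounded_clinear :: "('a::complex_hilbert \<Rightarrow> 'a) \<Rightarrow> bool" where
  "bounded_clinear f \<longleftrightarrow> bounded_linear f \<and> (\<forall>c x. f (c *\<^sub>C x) = c *\<^sub>C f x)"

definition positive_op :: "('a::complex_hilbert \<Rightarrow> 'a) \<Rightarrow> bool" where
  "positive_op A \<longleftrightarrow> bounded_clinear A \<and>
     (\<forall>x. Im (cinner (A x) x) = 0 \<and> 0 \<le> Re (cinner (A x) x))"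

definition is_adjoint :: "('a::complex_hilbert \<Rightarrow> 'a) \<Rightarrow> ('a \<Rightarrow> 'a) \<Rightarrow> bool" where
  "is_adjoint S S' \<longleftrightarrow> (\<forall>x y. cinner (S x) y = cinner x (S' y))"

definition B_A :: "('a::complex_hilbert \<Rightarrow> 'a) \<Rightarrow> ('a \<Rightarrow> 'a) \<Rightarrow> bool" where
  "B_A A S \<longleftrightarrow> bounded_clinear S \<and>
     (\<exists>S'. is_adjoint S S' \<and> range (S' \<circ> A) \<subseteq> range A)"

text \<open>Generic A-seminorm and A-Davis-Wielandt radius with respect to an inner product
  \<open>inn\<close> and positive operator \<open>Aop\<close>: \<open>\<langle>x,z\<rangle>_A = \<langle>A x, z\<rangle>\<close>, \<open>\<parallel>z\<parallel>_A = \<langle>A z, z\<rangle>^{1/2}\<close>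
  (which equals \<open>\<parallel>A^{1/2} z\<parallel>\<close>).\<close>
definition semi_norm_gen :: "('b \<Rightarrow> 'b \<Rightarrow> complex) \<Rightarrow> ('b \<Rightarrow> 'b) \<Rightarrow> 'b \<Rightarrow> real" where
  "semi_norm_gen inn Aop z = sqrt (Re (inn (Aop z) z))"

definition dw_gen :: "('b \<Rightarrow> 'b \<Rightarrow> complex) \<Rightarrow> ('b \<Rightarrow> 'b) \<Rightarrow> ('b \<Rightarrow> 'b) \<Rightarrow> real" where
  "dw_gen inn Aop S = Sup {sqrt ((cmod (inn (Aop (S z)) z))\<^sup>2 + (semi_norm_gen inn Aop (S z)) ^ 4)
                          | z. semi_norm_gen inn Aop z = 1}"

definition dw_A :: "('a::complex_hilbert \<Rightarrow> 'a) \<Rightarrow> ('a \<Rightarrow> 'a) \<Rightarrow> real" where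
  "dw_A A S = dw_gen cinner A S"

definition sum_cinner :: "('a::complex_hilbert \<times> 'a) \<Rightarrow> ('a \<times> 'a) \<Rightarrow> complex" where
  "sum_cinner x z = cinner (fst x) (fst z) + cinner (snd x) (snd z)"

definition diag_op :: "('a \<Rightarrow> 'a) \<Rightarrow> ('a \<Rightarrow> 'a) \<Rightarrow> ('a \<times> 'a) \<Rightarrow> ('a \<times> 'a)" where
  "diag_op S T x = (S (fst x), T (snd x))"

definition A0 :: "('a \<Rightarrow> 'a) \<Rightarrow> ('a \<times> 'a) \<Rightarrow> ('a \<times> 'a)" where
  "A0 A = diag_op A A"

definition dw_A0 :: "('a::complex_hilbert \<Rightarrow> 'a) \<Rightarrow> ('a \<times> 'a \<Rightarrow> 'a \<times> 'a) \<Rightarrow> real" where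
  "dw_A0 A M = dw_gen sum_cinner (A0 A) M"

end

theory Submission
  imports Defs
begin

text \<open>For a vector (x, y) with |x|_A^2 = s and |y|_A^2 = 1 - s, both coordinates
  <S z, z>_A and |S z|_A^2 of a Davis-Wielandt point are homogeneous of degree 2 in z. Hence
  the point of diag(S, T) at (x, y) is s times a point of the Davis-Wielandt shell of S plus
  (1 - s) times one of T, and the triangle inequality in the plane bounds its modulus by
  s dw_A(S) + (1 - s) dw_A(T) <= max (dw_A(S), dw_A(T)); the vectors (x, 0) and (0, y) give
  the reverse inequality.

  Homogeneity handles only |x|_A > 0; when |x|_A = 0 one needs |S x|_A = 0, i.e. that S is
  A-bounded. For S in B_A(H) this comes from Douglas' lemma: a Baire category argument gives
  a bounded W with S* A = A W, the operator C = W S is A-selfadjoint with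
  |S x|_A^2 = <A x, C x>, and k |-> |C^k x|_A^2 is log-convex (Cauchy-Schwarz) with at most
  geometric growth, which forces |C x|_A^2 <= |C|^2 |x|_A^2.\<close>

instance complex_hilbert \<subseteq> banach ..

section \<open>Hermitian forms\<close>

lemma quadratic_nonneg_imp_discriminant_le:
  fixes P Q b :: real
  assumes nonneg: "\<And>t. 0 \<le> P - 2 * t * b + t\<^sup>2 * Q" and "Q \<ge> 0"
  shows "b\<^sup>2 \<le> P * Q"
proof (cases "Q = 0")
  case True
  have "b = 0"
  proof (rule ccontr)
    assume "b \<noteq> 0"
    then show False using nonneg[of "(P + 1) / (2 * b)"] True by simp
  qed
  then show ?thesis using True by simp
next
  case False
  then have "Q > 0" using \<open>Q \<ge> 0\<close> by simp
  then show ?thesis using nonneg[of "b / Q"] by (simp add: power2_eq_square field_simps)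
qed

locale hermitian_form =
  fixes B :: "'a::complex_vector_space \<Rightarrow> 'a \<Rightarrow> complex"
  assumes add_left: "B (x + y) z = B x z + B y z"
    and scaleC_left: "B (c *\<^sub>C x) y = c * B x y"
    and hermitian: "B x y = cnj (B y x)"
begin

lemma add_right: "B x (y + z) = B x y + B x z"
  by (metis add_left hermitian complex_cnj_add)

lemma scaleC_right: "B x (c *\<^sub>C y) = cnj c * B x y"
  by (metis scaleC_left hermitian complex_cnj_mult)

lemma zero_right [simp]: "B x 0 = 0"
  using add_right[of x 0 0] by simp

lemma diff_right: "B x (y - z) = B x y - B x z"
  using add_right[of x "y - z" z] by simp

lemma scaleR_left: "B (r *\<^sub>R x) y = complex_of_real r * B x y"
  by (simp add: scaleC_of_real[symmetric] scaleC_left)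

lemma scaleR_right: "B x (r *\<^sub>R y) = complex_of_real r * B x y"
  by (simp add: scaleC_of_real[symmetric] scaleC_right)

lemma Re_self_add_scaleC:
  "Re (B (x + s *\<^sub>C y) (x + s *\<^sub>C y))
     = Re (B x x) + 2 * Re (cnj s * B x y) + (cmod s)\<^sup>2 * Re (B y y)"
proof -
  have "B (x + s *\<^sub>C y) (x + s *\<^sub>C y) = B x x + cnj s * B x y + cnj (cnj s * B x y) + s * cnj s * B y y"
    by (simp add: add_left add_right scaleC_left scaleC_right hermitian[of y x] algebra_simps)
  moreover have "s * cnj s = complex_of_real ((cmod s)\<^sup>2)"
    by (rule complex_norm_square[symmetric])
  ultimately show ?thesis by simp
qed

lemma cauchy_schwarz:
  assumes pos: "\<And>x. 0 \<le> Re (B x x)"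
  shows "(cmod (B x y))\<^sup>2 \<le> Re (B x x) * Re (B y y)"
proof (cases "B x y = 0")
  case False
  define u where "u = sgn (B x y)"
  have u: "cmod u = 1" "cnj u * B x y = of_real (cmod (B x y))"
  proof -
    show "cmod u = 1" using False by (simp add: u_def norm_sgn)
    have "cnj u * B x y = (B x y * cnj (B x y)) / of_real (cmod (B x y))"
      by (simp add: u_def sgn_eq mult.commute)
    also have "\<dots> = of_real (cmod (B x y))"
      using False by (simp add: complex_norm_square[symmetric] power2_eq_square)
    finally show "cnj u * B x y = of_real (cmod (B x y))" .
  qed
  have "0 \<le> Re (B x x) - 2 * t * cmod (B x y) + t\<^sup>2 * Re (B y y)" for t
  proof -
    have "Re (B (x + (- of_real t * u) *\<^sub>C y) (x + (- of_real t * u) *\<^sub>C y))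
        = Re (B x x) - 2 * t * cmod (B x y) + t\<^sup>2 * Re (B y y)"
      unfolding Re_self_add_scaleC by (simp add: norm_mult mult.assoc u)
    then show ?thesis using pos by metis
  qed
  then show ?thesis using pos[of y] by (rule quadratic_nonneg_imp_discriminant_le)
qed (simp add: pos zero_le_mult_iff)

end

interpretation cinner: hermitian_form "cinner :: 'a::complex_inner \<Rightarrow> 'a \<Rightarrow> complex"
  by unfold_locales (auto intro: cinner_add_left cinner_scaleC_left cinner_commute)

lemma cinner_eq_zero_iff [simp]: "cinner x x = 0 \<longleftrightarrow> x = (0::'a::complex_inner)"
  by (simp add: cinner_self_norm)

lemma cinner_extensionality:
  fixes x y :: "'a::complex_inner"
  assumes "\<And>z. cinner z x = cinner z y"
  shows "x = y"
proof -
  have "cinner (x - y) (x - y) = 0"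
    using assms[of "x - y"] by (simp add: cinner.diff_right)
  then show ?thesis by simp
qed

lemma norm_cinner_le: "cmod (cinner x y) \<le> norm x * norm (y::'a::complex_inner)"
proof -
  have "(cmod (cinner x y))\<^sup>2 \<le> (norm x * norm y)\<^sup>2"
    using cinner.cauchy_schwarz[of x y] by (simp add: cinner_self_norm power_mult_distrib)
  then show ?thesis by (rule power2_le_imp_le) simp
qed

section \<open>Positive operators and the A-seminorm\<close>

lemma positive_op_bounded_linear: "positive_op A \<Longrightarrow> bounded_linear A"
  by (simp add: positive_op_def bounded_clinear_def)

lemma B_A_bounded_linear: "B_A A S \<Longrightarrow> bounded_linear S"
  by (simp add: B_A_def bounded_clinear_def)

lemma positive_op_hermitian:
  assumes "positive_op A"
  shows "cinner (A x) y = cinner x (A y)"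
proof -
  have lin: "bounded_linear A" and sc: "\<And>c x. A (c *\<^sub>C x) = c *\<^sub>C A x"
    and real: "\<And>z. Im (cinner (A z) z) = 0"
    using assms by (auto simp: positive_op_def bounded_clinear_def)
  interpret A: bounded_linear A by (rule lin)
  define a where "a = cinner (A x) y"
  define b where "b = cinner (A y) x"
  have "cinner (A (x + y)) (x + y) = cinner (A x) x + a + b + cinner (A y) y"
    by (simp add: A.add cinner_add_left cinner.add_right a_def b_def)
  then have 1: "Im a + Im b = 0" using real[of "x + y"] real[of x] real[of y] by simp
  have "cinner (A (x + \<i> *\<^sub>C y)) (x + \<i> *\<^sub>C y) = cinner (A x) x - \<i> * a + \<i> * b + cinner (A y) y"
    by (simp add: A.add sc cinner_add_left cinner.add_right cinner_scaleC_left
        cinner.scaleC_right a_def b_def algebra_simps)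
  then have 2: "Re b - Re a = 0" using real[of "x + \<i> *\<^sub>C y"] real[of x] real[of y] by simp
  have "b = cnj a" using 1 2 by (simp add: complex_eq_iff)
  then show ?thesis unfolding a_def b_def by (metis cinner_commute complex_cnj_cnj)
qed

lemma positive_op_hermitian_form:
  assumes "positive_op A"
  shows "hermitian_form (\<lambda>x y. cinner (A x) y)"
proof
  interpret A: bounded_linear A using assms by (rule positive_op_bounded_linear)
  show "cinner (A (x + y)) z = cinner (A x) z + cinner (A y) z" for x y z
    by (simp add: A.add cinner_add_left)
  show "cinner (A (c *\<^sub>C x)) y = c * cinner (A x) y" for c x y
    using assms by (simp add: positive_op_def bounded_clinear_def cinner_scaleC_left)
  show "cinner (A x) y = cnj (cinner (A y) x)" for x y
    by (metis positive_op_hermitian[OF assms] cinner_commute)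
qed

definition sqnorm_A :: "('a::complex_inner \<Rightarrow> 'a) \<Rightarrow> 'a \<Rightarrow> real" where
  "sqnorm_A A x = Re (cinner (A x) x)"

lemma sqnorm_A_nonneg: "positive_op A \<Longrightarrow> 0 \<le> sqnorm_A A x"
  by (simp add: positive_op_def sqnorm_A_def)

lemma cinner_A_cauchy_schwarz:
  assumes "positive_op A"
  shows "(cmod (cinner (A x) y))\<^sup>2 \<le> sqnorm_A A x * sqnorm_A A y"
proof -
  interpret hermitian_form "\<lambda>x y. cinner (A x) y"
    using assms by (rule positive_op_hermitian_form)
  show ?thesis
    unfolding sqnorm_A_def by (rule cauchy_schwarz) (use assms in \<open>simp add: positive_op_def\<close>)
qed

lemma sqnorm_A_scaleR:
  assumes "linear A"
  shows "sqnorm_A A (r *\<^sub>R x) = r\<^sup>2 * sqnorm_A A x"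
  by (simp add: sqnorm_A_def linear_scale[OF assms] cinner.scaleR_left cinner.scaleR_right
      power2_eq_square)

lemma sqnorm_A_le_norm:
  assumes "bounded_linear A"
  obtains K where "K \<ge> 0" "\<And>u. sqnorm_A A u \<le> K * (norm u)\<^sup>2"
proof -
  obtain K where K: "K > 0" "\<And>u. norm (A u) \<le> norm u * K"
    using bounded_linear.pos_bounded[OF assms] by blast
  have "sqnorm_A A u \<le> K * (norm u)\<^sup>2" for u
  proof -
    have "sqnorm_A A u \<le> cmod (cinner (A u) u)"
      unfolding sqnorm_A_def by (rule complex_Re_le_cmod)
    also have "\<dots> \<le> norm (A u) * norm u" by (rule norm_cinner_le)
    also have "\<dots> \<le> norm u * K * norm u" by (simp add: K(2) mult_right_mono)
    finally show ?thesis by (simp add: power2_eq_square algebra_simps)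
  qed
  then show ?thesis using K(1) that[of K] by simp
qed

lemma sqnorm_A_normalize:
  assumes "positive_op A" and "sqnorm_A A x \<noteq> 0"
  shows "sqnorm_A A ((1 / sqrt (sqnorm_A A x)) *\<^sub>R x) = 1"
  using assms sqnorm_A_nonneg[OF assms(1), of x]
  by (simp add: sqnorm_A_scaleR bounded_linear.linear positive_op_bounded_linear power_divide)

lemma is_adjoint_bounded_linear:
  assumes S: "bounded_linear S" and adj: "is_adjoint S S'"
  shows "bounded_linear S'"
proof -
  have adj': "\<And>x y. cinner (S x) y = cinner x (S' y)" using adj by (simp add: is_adjoint_def)
  obtain K where K: "K > 0" "\<And>u. norm (S u) \<le> norm u * K"
    using bounded_linear.pos_bounded[OF S] by blast
  have add: "S' (y + z) = S' y + S' z" for y z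
    by (rule cinner_extensionality) (simp add: adj'[symmetric] cinner.add_right)
  have scaleR: "S' (r *\<^sub>R y) = r *\<^sub>R S' y" for r y
    by (rule cinner_extensionality) (simp add: adj'[symmetric] cinner.scaleR_right)
  have "norm (S' y) \<le> norm y * K" for y
  proof -
    have "(norm (S' y))\<^sup>2 = Re (cinner (S (S' y)) y)" by (simp add: cinner_self_norm adj')
    also have "\<dots> \<le> cmod (cinner (S (S' y)) y)" by (rule complex_Re_le_cmod)
    also have "\<dots> \<le> norm (S (S' y)) * norm y" by (rule norm_cinner_le)
    also have "\<dots> \<le> norm (S' y) * K * norm y" by (simp add: K(2) mult_right_mono)
    finally have "norm (S' y) * norm (S' y) \<le> norm (S' y) * (norm y * K)"
      by (simp add: power2_eq_square algebra_simps)
    then show ?thesis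
      using K(1) by (cases "S' y = 0") (auto simp: mult_le_cancel_left_pos)
  qed
  with add scaleR show ?thesis by (intro bounded_linear_intro[where K = K]) auto
qed

section \<open>Douglas-type lifting along a range inclusion\<close>

definition liftable :: "('c \<Rightarrow> 'b) \<Rightarrow> ('a::real_normed_vector \<Rightarrow> 'b) \<Rightarrow> real \<Rightarrow> 'c set" where
  "liftable L A c = {y. \<exists>w. L y = A w \<and> norm w \<le> c}"

lemma liftable_diff:
  assumes L: "linear L" and A: "linear A"
    and "a \<in> liftable L A c" "b \<in> liftable L A d"
  shows "b - a \<in> liftable L A (c + d)"
proof -
  obtain wa wb where "L a = A wa" "norm wa \<le> c" "L b = A wb" "norm wb \<le> d"
    using assms(3,4) unfolding liftable_def by blast
  then have "L (b - a) = A (wb - wa)" "norm (wb - wa) \<le> c + d"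
    using norm_triangle_ineq4[of wb wa] by (auto simp: linear_diff[OF L] linear_diff[OF A])
  then show ?thesis unfolding liftable_def by blast
qed

lemma range_inclusion_interior_closure_liftable:
  fixes L :: "'c::banach \<Rightarrow> 'b::real_normed_vector" and A :: "'a::real_normed_vector \<Rightarrow> 'b"
  assumes range: "\<And>y. \<exists>w. L y = A w"
  shows "\<exists>n::nat. interior (closure (liftable L A n)) \<noteq> {}"
proof (rule ccontr)
  assume "\<not> ?thesis"
  then have "euclidean interior_of \<Union>(range (\<lambda>n::nat. closure (liftable L A n))) = {}"
    by (intro Baire_category_alt)
      (auto simp: completely_metrizable_space_euclidean closed_closedin[symmetric])
  moreover have "y \<in> (\<Union>n::nat. liftable L A n)" for y
  proof -
    obtain w where "L y = A w" using range by blast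
    moreover have "norm w \<le> real (nat \<lceil>norm w\<rceil>)" by linarith
    ultimately show ?thesis unfolding liftable_def by blast
  qed
  then have "\<Union>(range (\<lambda>n::nat. closure (liftable L A n))) = UNIV"
    using closure_subset by blast
  ultimately show False by simp
qed

lemma range_inclusion_ball_subset_closure_liftable:
  fixes L :: "'c::banach \<Rightarrow> 'b::real_normed_vector" and A :: "'a::real_normed_vector \<Rightarrow> 'b"
  assumes L: "linear L" and A: "linear A" and range: "\<And>y. \<exists>w. L y = A w"
  obtains c r where "r > 0" "ball 0 r \<subseteq> closure (liftable L A c)"
proof -
  obtain n :: nat and y0 r where r: "r > 0" "ball y0 r \<subseteq> closure (liftable L A n)"
    using range_inclusion_interior_closure_liftable[of L A, OF range] by (meson ex_in_conv mem_interior)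
  have "z \<in> closure (liftable L A (real n + real n))" if z: "norm z < r" for z
  proof (subst closure_approachable, intro allI impI)
    fix e :: real assume e: "e > 0"
    have "y0 \<in> closure (liftable L A n)" "y0 + z \<in> closure (liftable L A n)"
      using r z by (auto simp: dist_norm)
    then obtain a b where a: "a \<in> liftable L A n" "dist a y0 < e / 2"
      and b: "b \<in> liftable L A n" "dist b (y0 + z) < e / 2"
      using e by (meson closure_approachable half_gt_zero)
    have "dist (b - a) z \<le> dist b (y0 + z) + dist a y0"
      unfolding dist_norm using norm_triangle_ineq4[of "b - (y0 + z)" "a - y0"]
      by (simp add: algebra_simps)
    then have "dist (b - a) z < e" using a b by linarith
    with liftable_diff[OF L A a(1) b(1)] show "\<exists>x\<in>liftable L A (real n + real n). dist x z < e"
      by blast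
  qed
  then have "ball 0 r \<subseteq> closure (liftable L A (real n + real n))" by auto
  with r(1) show ?thesis by (rule that)
qed

lemma ball_subset_closure_liftable_imp_approximate_lift:
  fixes L :: "'c::real_normed_vector \<Rightarrow> 'b::real_normed_vector" and A :: "'a::real_normed_vector \<Rightarrow> 'b"
  assumes L: "linear L" and A: "linear A"
    and r: "r > 0" "ball 0 r \<subseteq> closure (liftable L A c)"
  shows "\<exists>y w. L y = A w \<and> norm w \<le> 2 * c / r * norm z \<and> norm (z - y) \<le> norm z / 2"
proof (cases "z = 0")
  case True
  then show ?thesis by (intro exI[of _ 0]) (simp add: linear_0[OF L] linear_0[OF A])
next
  case False
  define t where "t = 2 * norm z / r"
  have t: "t > 0" unfolding t_def using False r by simp
  have "norm ((1 / t) *\<^sub>R z) < r"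
    using False r(1) by (simp add: t_def)
  then have "(1 / t) *\<^sub>R z \<in> closure (liftable L A c)"
    using r(2) by auto
  moreover have "r / 4 > 0" using r(1) by simp
  ultimately obtain a where "a \<in> liftable L A c" "dist a ((1 / t) *\<^sub>R z) < r / 4"
    unfolding closure_approachable by blast
  then obtain w where a: "dist a ((1 / t) *\<^sub>R z) < r / 4" "L a = A w" "norm w \<le> c"
    unfolding liftable_def by blast
  have "L (t *\<^sub>R a) = A (t *\<^sub>R w)"
    by (simp add: linear_scale[OF L] linear_scale[OF A] a(2))
  moreover have "norm (t *\<^sub>R w) \<le> 2 * c / r * norm z"
  proof -
    have "norm (t *\<^sub>R w) \<le> t * c" using a(3) t by (simp add: mult_left_mono)
    then show ?thesis by (simp add: t_def mult_ac)
  qed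
  moreover have "norm (z - t *\<^sub>R a) \<le> norm z / 2"
  proof -
    have "z - t *\<^sub>R a = t *\<^sub>R ((1 / t) *\<^sub>R z - a)" using t by (simp add: scaleR_diff_right)
    then have "norm (z - t *\<^sub>R a) = t * dist a ((1 / t) *\<^sub>R z)"
      using t by (simp add: dist_norm norm_minus_commute)
    also have "\<dots> \<le> t * (r / 4)" using a(1) t by simp
    finally show ?thesis using r(1) by (simp add: t_def)
  qed
  ultimately show ?thesis by blast
qed

lemma norm_suminf_le_of_geometric_bound:
  fixes w :: "nat \<Rightarrow> 'a::banach"
  assumes "\<And>k. norm (w k) \<le> C * (1 / 2) ^ k"
  shows "summable w" and "norm (suminf w) \<le> 2 * C"
proof -
  have g: "summable (\<lambda>k. C * (1 / 2 :: real) ^ k)" by (intro summable_mult summable_geometric) simp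
  have n: "summable (\<lambda>k. norm (w k))" by (rule summable_comparison_test'[OF g, of 0]) (simp add: assms)
  then show "summable w" by (rule summable_norm_cancel)
  have "norm (suminf w) \<le> (\<Sum>k. norm (w k))" by (rule summable_norm[OF n])
  also have "\<dots> \<le> (\<Sum>k. C * (1 / 2) ^ k)" by (rule suminf_le[OF assms n g])
  also have "\<dots> = 2 * C" using suminf_geometric[of "1 / 2 :: real"] by (simp add: suminf_mult)
  finally show "norm (suminf w) \<le> 2 * C" .
qed

lemma approximate_lift_imp_lift:
  fixes L :: "'c::real_normed_vector \<Rightarrow> 'b::real_normed_vector" and A :: "'a::banach \<Rightarrow> 'b"
  assumes L: "bounded_linear L" and A: "bounded_linear A" and "M \<ge> 0"
    and approx: "\<And>z. \<exists>y w. L y = A w \<and> norm w \<le> M * norm z \<and> norm (z - y) \<le> norm z / 2"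
  shows "\<exists>w. L y = A w \<and> norm w \<le> 2 * M * norm y"
proof -
  interpret L: bounded_linear L by (rule L)
  interpret A: bounded_linear A by (rule A)
  obtain Y W where YW: "\<And>z. L (Y z) = A (W z)" "\<And>z. norm (W z) \<le> M * norm z"
      "\<And>z. norm (z - Y z) \<le> norm z / 2"
    using approx by metis
  define z where "z k = ((\<lambda>z. z - Y z) ^^ k) y" for k
  have z_0: "z 0 = y" and z_Suc: "z (Suc k) = z k - Y (z k)" for k by (simp_all add: z_def)
  have z_norm: "norm (z k) \<le> norm y * (1 / 2) ^ k" for k
  proof (induction k)
    case (Suc k)
    have "norm (z (Suc k)) \<le> norm (z k) / 2" unfolding z_Suc by (rule YW(3))
    with Suc show ?case by simp
  qed (simp add: z_0)
  have w_norm: "norm (W (z k)) \<le> M * norm y * (1 / 2) ^ k" for k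
    using YW(2)[of "z k"] mult_left_mono[OF z_norm[of k] \<open>M \<ge> 0\<close>] by (simp add: mult.assoc)
  note w_sum = norm_suminf_le_of_geometric_bound[OF w_norm]
  have "(\<lambda>m. A (\<Sum>k<m. W (z k))) \<longlonglongrightarrow> A (\<Sum>k. W (z k))"
    by (rule A.tendsto[OF summable_LIMSEQ[OF w_sum(1)]])
  moreover have "(\<lambda>m. A (\<Sum>k<m. W (z k))) \<longlonglongrightarrow> L y"
  proof -
    have telescope: "A (\<Sum>k<m. W (z k)) = L y - L (z m)" for m
      by (induction m) (simp_all add: A.add L.diff YW(1)[symmetric] z_0 z_Suc)
    have "z \<longlonglongrightarrow> 0"
      by (rule Lim_null_comparison[of _ "\<lambda>k. norm y * (1 / 2) ^ k"])
        (simp_all add: z_norm tendsto_mult_right_zero LIMSEQ_realpow_zero)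
    then have "(\<lambda>m. L y - L (z m)) \<longlonglongrightarrow> L y - L 0"
      by (intro tendsto_intros L.tendsto)
    then show ?thesis by (simp add: telescope L.zero)
  qed
  ultimately have "L y = A (\<Sum>k. W (z k))" by (rule LIMSEQ_unique[rotated])
  with w_sum(2) show ?thesis by (metis mult.assoc)
qed

lemma range_inclusion_bounded_lift:
  fixes L :: "'c::banach \<Rightarrow> 'b::real_normed_vector" and A :: "'a::banach \<Rightarrow> 'b"
  assumes L: "bounded_linear L" and A: "bounded_linear A" and range: "\<And>y. \<exists>w. L y = A w"
  obtains K where "K > 0" "\<And>y. \<exists>w. L y = A w \<and> norm w \<le> K * norm y"
proof -
  obtain c r where r: "r > 0" "ball 0 r \<subseteq> closure (liftable L A c)"
    using range_inclusion_ball_subset_closure_liftable[OF bounded_linear.linear[OF L]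
        bounded_linear.linear[OF A] range] by blast
  then have "liftable L A c \<noteq> {}"
    by (metis centre_in_ball closure_empty empty_iff subsetD)
  then have "c \<ge> 0" unfolding liftable_def by (force intro: order_trans[OF norm_ge_zero])
  define M where "M = 2 * c / r"
  have M: "M \<ge> 0" using \<open>c \<ge> 0\<close> r(1) by (simp add: M_def)
  have "\<exists>w. L y = A w \<and> norm w \<le> (2 * M + 1) * norm y" for y
  proof -
    obtain w where "L y = A w" "norm w \<le> 2 * M * norm y"
      using approximate_lift_imp_lift[OF L A M ball_subset_closure_liftable_imp_approximate_lift[OF
            bounded_linear.linear[OF L] bounded_linear.linear[OF A] r, folded M_def]]
      by blast
    moreover have "2 * M * norm y \<le> (2 * M + 1) * norm y" by (simp add: mult_right_mono)
    ultimately show ?thesis by (meson order_trans)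
  qed
  with M show ?thesis by (intro that[of "2 * M + 1"]) simp_all
qed

section \<open>Operators in B_A are A-bounded\<close>

lemma log_convex_power_lower_bound:
  fixes a :: "nat \<Rightarrow> real"
  assumes log_convex: "\<And>k. (a (Suc k))\<^sup>2 \<le> a k * a (Suc (Suc k))"
    and pos: "a 0 > 0" "a 1 > 0"
  shows "(a 1 / a 0) ^ k * a 0 \<le> a k"
proof -
  define \<rho> where "\<rho> = a 1 / a 0"
  have \<rho>: "\<rho> > 0" using pos by (simp add: \<rho>_def)
  have step: "a k > 0 \<and> \<rho> * a k \<le> a (Suc k)" for k
  proof (induction k)
    case 0
    then show ?case using pos by (simp add: \<rho>_def)
  next
    case (Suc k)
    then have ak: "a k > 0" and st: "\<rho> * a k \<le> a (Suc k)" by auto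
    have ak1: "a (Suc k) > 0" using ak st \<rho> by (meson mult_pos_pos order_less_le_trans)
    have "a k * (\<rho> * a (Suc k)) = (\<rho> * a k) * a (Suc k)" by (simp add: mult_ac)
    also have "\<dots> \<le> a (Suc k) * a (Suc k)" using st ak1 by (simp add: mult_right_mono)
    also have "\<dots> \<le> a k * a (Suc (Suc k))" using log_convex[of k] by (simp add: power2_eq_square)
    finally have "\<rho> * a (Suc k) \<le> a (Suc (Suc k))" using ak by (simp add: mult_le_cancel_left_pos)
    with ak1 show ?case by simp
  qed
  have "\<rho> ^ k * a 0 \<le> a k"
  proof (induction k)
    case (Suc k)
    have "\<rho> ^ Suc k * a 0 = \<rho> * (\<rho> ^ k * a 0)" by simp
    also have "\<dots> \<le> \<rho> * a k" using Suc \<rho> by (simp add: mult_left_mono)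
    also have "\<dots> \<le> a (Suc k)" using step by blast
    finally show ?case .
  qed simp
  then show ?thesis by (simp add: \<rho>_def)
qed

lemma log_convex_ratio_le:
  fixes a :: "nat \<Rightarrow> real"
  assumes nonneg: "\<And>k. 0 \<le> a k"
    and log_convex: "\<And>k. (a (Suc k))\<^sup>2 \<le> a k * a (Suc (Suc k))"
    and growth: "\<And>k. a k \<le> B * q ^ k" and q: "q > 0"
  shows "a 1 \<le> q * a 0"
proof (rule ccontr)
  assume "\<not> ?thesis"
  then have gt: "q * a 0 < a 1" by simp
  have a0: "a 0 > 0"
  proof (rule ccontr)
    assume "\<not> a 0 > 0"
    then have "a 0 = 0" using nonneg[of 0] by simp
    then show False using log_convex[of 0] gt by simp
  qed
  have "0 \<le> q * a 0" using q a0 by simp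
  with gt have a1: "a 1 > 0" by linarith
  define \<rho> where "\<rho> = a 1 / a 0"
  have "1 < \<rho> / q" using gt a0 q by (simp add: \<rho>_def field_simps)
  then obtain k where k: "B / a 0 < (\<rho> / q) ^ k" using real_arch_pow by blast
  have "\<rho> ^ k * a 0 \<le> B * q ^ k"
    using log_convex_power_lower_bound[OF log_convex a0 a1, of k] growth[of k] by (simp add: \<rho>_def)
  then have "(\<rho> / q) ^ k \<le> B / a 0" using q a0 by (simp add: power_divide field_simps)
  with k show False by simp
qed

lemma A_selfadjoint_sqnorm_A_le:
  fixes A C :: "'a::complex_hilbert \<Rightarrow> 'a"
  assumes A: "positive_op A"
    and selfadjoint: "\<And>x y. cinner (A (C x)) y = cinner (A x) (C y)"
    and bound: "\<And>x. norm (C x) \<le> K * norm x" and K: "K > 0"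
  shows "sqnorm_A A (C x) \<le> K\<^sup>2 * sqnorm_A A x"
proof -
  obtain KA where KA: "KA \<ge> 0" "\<And>u. sqnorm_A A u \<le> KA * (norm u)\<^sup>2"
    using sqnorm_A_le_norm[OF positive_op_bounded_linear[OF A]] by blast
  have log_convex: "(sqnorm_A A (C y))\<^sup>2 \<le> sqnorm_A A y * sqnorm_A A (C (C y))" for y
  proof -
    have "sqnorm_A A (C y) \<le> cmod (cinner (A y) (C (C y)))"
      unfolding sqnorm_A_def selfadjoint by (rule complex_Re_le_cmod)
    then have "(sqnorm_A A (C y))\<^sup>2 \<le> (cmod (cinner (A y) (C (C y))))\<^sup>2"
      using sqnorm_A_nonneg[OF A] by (simp add: power_mono)
    also have "\<dots> \<le> sqnorm_A A y * sqnorm_A A (C (C y))" by (rule cinner_A_cauchy_schwarz[OF A])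
    finally show ?thesis .
  qed
  have norm_iterate: "norm ((C ^^ k) x) \<le> K ^ k * norm x" for k
  proof (induction k)
    case (Suc k)
    have "norm ((C ^^ Suc k) x) \<le> K * norm ((C ^^ k) x)" using bound by simp
    also have "\<dots> \<le> K * (K ^ k * norm x)" using Suc.IH K by (simp add: mult_left_mono)
    finally show ?case by simp
  qed simp
  have "sqnorm_A A ((C ^^ 1) x) \<le> K\<^sup>2 * sqnorm_A A ((C ^^ 0) x)"
  proof (rule log_convex_ratio_le[where a = "\<lambda>k. sqnorm_A A ((C ^^ k) x)"])
    show "0 \<le> sqnorm_A A ((C ^^ k) x)" for k by (rule sqnorm_A_nonneg[OF A])
    show "(sqnorm_A A ((C ^^ Suc k) x))\<^sup>2
        \<le> sqnorm_A A ((C ^^ k) x) * sqnorm_A A ((C ^^ Suc (Suc k)) x)" for k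
      using log_convex[of "(C ^^ k) x"] by simp
    show "sqnorm_A A ((C ^^ k) x) \<le> (KA * (norm x)\<^sup>2) * (K\<^sup>2) ^ k" for k
    proof -
      have "sqnorm_A A ((C ^^ k) x) \<le> KA * (norm ((C ^^ k) x))\<^sup>2" by (rule KA(2))
      also have "\<dots> \<le> KA * (K ^ k * norm x)\<^sup>2"
        using norm_iterate[of k] KA(1) by (intro mult_left_mono power_mono) auto
      finally show ?thesis by (simp add: power_mult_distrib power_mult[symmetric] mult_ac)
    qed
    show "K\<^sup>2 > 0" using K by simp
  qed
  then show ?thesis by simp
qed

text \<open>The operator \<open>C\<close> below is \<open>S\<^sup>\<sharp> S\<close>, the \<open>A\<close>-adjoint \<open>S\<^sup>\<sharp>\<close> being a bounded
  solution \<open>W\<close> of \<open>A W = S\<^sup>* A\<close>.\<close>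

lemma B_A_obtains_sharp_comp:
  assumes A: "positive_op A" and S: "B_A A S"
  obtains K C where "K > 0" "\<And>x. norm (C x) \<le> K * norm x"
    "\<And>x y. cinner (A (C x)) y = cinner (A x) (C y)"
    "\<And>x. sqnorm_A A (S x) = Re (cinner (A x) (C x))"
proof -
  obtain S' where adj: "is_adjoint S S'" and range: "range (S' \<circ> A) \<subseteq> range A"
    using S by (auto simp: B_A_def)
  have adj': "\<And>x y. cinner (S x) y = cinner x (S' y)" using adj by (simp add: is_adjoint_def)
  have hermA: "\<And>x y. cinner (A x) y = cinner x (A y)" by (rule positive_op_hermitian[OF A])
  have Sl: "bounded_linear S" and Al: "bounded_linear A"
    using S A by (simp_all add: B_A_bounded_linear positive_op_bounded_linear)
  have L: "bounded_linear (\<lambda>y. S' (A y))"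
    using bounded_linear_compose[OF is_adjoint_bounded_linear[OF Sl adj] Al] .
  have "\<exists>w. S' (A y) = A w" for y using range by auto
  then obtain KW where KW: "KW > 0" "\<And>y. \<exists>w. S' (A y) = A w \<and> norm w \<le> KW * norm y"
    using range_inclusion_bounded_lift[OF L Al] by blast
  then obtain W where W: "\<And>y. S' (A y) = A (W y)" "\<And>y. norm (W y) \<le> KW * norm y"
    by metis
  obtain KS where KS: "KS > 0" "\<And>u. norm (S u) \<le> norm u * KS"
    using bounded_linear.pos_bounded[OF Sl] by blast
  show ?thesis
  proof (rule that[of "KW * KS" "\<lambda>x. W (S x)"])
    show "KW * KS > 0" using KW KS by simp
    show "norm (W (S x)) \<le> KW * KS * norm x" for x
    proof -
      have "norm (W (S x)) \<le> KW * norm (S x)" by (rule W(2))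
      also have "\<dots> \<le> KW * (norm x * KS)" using KW(1) KS(2) by (simp add: mult_left_mono)
      finally show ?thesis by (simp add: mult_ac)
    qed
    show "cinner (A (W (S x))) y = cinner (A x) (W (S y))" for x y
    proof -
      have "cinner (A (W (S x))) y = cnj (cinner y (S' (A (S x))))"
        by (subst cinner_commute) (simp add: W(1))
      also have "\<dots> = cnj (cinner (A (S y)) (S x))" by (simp add: adj'[symmetric] hermA)
      also have "\<dots> = cinner (S x) (A (S y))" by (simp add: cinner_commute[of "S x"])
      also have "\<dots> = cinner (A x) (W (S y))" by (simp add: adj' W(1) hermA)
      finally show ?thesis .
    qed
    show "sqnorm_A A (S x) = Re (cinner (A x) (W (S x)))" for x
      by (simp add: sqnorm_A_def hermA adj' W(1))
  qed
qed

lemma B_A_sqnorm_A_bounded: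
  assumes A: "positive_op A" and S: "B_A A S"
  obtains c where "c \<ge> 0" "\<And>x. sqnorm_A A (S x) \<le> c * sqnorm_A A x"
proof -
  obtain K C where K: "K > 0" and C: "\<And>x. norm (C x) \<le> K * norm x"
    "\<And>x y. cinner (A (C x)) y = cinner (A x) (C y)"
    "\<And>x. sqnorm_A A (S x) = Re (cinner (A x) (C x))"
    by (rule B_A_obtains_sharp_comp[OF A S], rule that)
  have "sqnorm_A A (S x) \<le> K * sqnorm_A A x" for x
  proof (rule power2_le_imp_le)
    have "sqnorm_A A (S x) \<le> cmod (cinner (A x) (C x))"
      unfolding C(3) by (rule complex_Re_le_cmod)
    then have "(sqnorm_A A (S x))\<^sup>2 \<le> (cmod (cinner (A x) (C x)))\<^sup>2"
      using sqnorm_A_nonneg[OF A] by (simp add: power_mono)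
    also have "\<dots> \<le> sqnorm_A A x * sqnorm_A A (C x)" by (rule cinner_A_cauchy_schwarz[OF A])
    also have "\<dots> \<le> sqnorm_A A x * (K\<^sup>2 * sqnorm_A A x)"
      by (intro mult_left_mono A_selfadjoint_sqnorm_A_le[OF A C(2) C(1) K] sqnorm_A_nonneg[OF A])
    also have "\<dots> = (K * sqnorm_A A x)\<^sup>2" by (simp add: power2_eq_square)
    finally show "(sqnorm_A A (S x))\<^sup>2 \<le> (K * sqnorm_A A x)\<^sup>2" .
    show "0 \<le> K * sqnorm_A A x" using K sqnorm_A_nonneg[OF A] by simp
  qed
  with K show ?thesis by (intro that[of K]) simp_all
qed

section \<open>Davis-Wielandt radius of a diagonal operator\<close>

definition dw_value :: "('a::complex_inner \<Rightarrow> 'a) \<Rightarrow> ('a \<Rightarrow> 'a) \<Rightarrow> 'a \<Rightarrow> real" where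
  "dw_value A S z = sqrt ((cmod (cinner (A (S z)) z))\<^sup>2 + (sqnorm_A A (S z))\<^sup>2)"

definition dw_value_diag ::
    "('a::complex_inner \<Rightarrow> 'a) \<Rightarrow> ('a \<Rightarrow> 'a) \<Rightarrow> ('a \<Rightarrow> 'a) \<Rightarrow> 'a \<times> 'a \<Rightarrow> real" where
  "dw_value_diag A S T p =
     sqrt ((cmod (cinner (A (S (fst p))) (fst p) + cinner (A (T (snd p))) (snd p)))\<^sup>2
       + (sqnorm_A A (S (fst p)) + sqnorm_A A (T (snd p)))\<^sup>2)"

lemma dw_A_eq_Sup_dw_value:
  assumes "positive_op A"
  shows "dw_A A S = Sup (dw_value A S ` {z. sqnorm_A A z = 1})"
proof -
  have "semi_norm_gen cinner A z = sqrt (sqnorm_A A z)" for z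
    by (simp add: semi_norm_gen_def sqnorm_A_def)
  moreover have "sqrt (sqnorm_A A z) ^ 4 = (sqnorm_A A z)\<^sup>2" for z
    using sqnorm_A_nonneg[OF assms] by (simp add: real_sqrt_power_even)
  ultimately show ?thesis
    unfolding dw_A_def dw_gen_def setcompr_eq_image
    by (intro arg_cong[where f = Sup] image_cong) (simp_all add: dw_value_def)
qed

lemma dw_A0_diag_eq_Sup_dw_value_diag:
  assumes "positive_op A"
  shows "dw_A0 A (diag_op S T)
    = Sup (dw_value_diag A S T ` {p. sqnorm_A A (fst p) + sqnorm_A A (snd p) = 1})"
proof -
  have "semi_norm_gen sum_cinner (A0 A) p = sqrt (sqnorm_A A (fst p) + sqnorm_A A (snd p))" for p
    by (simp add: semi_norm_gen_def sum_cinner_def A0_def diag_op_def sqnorm_A_def)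
  moreover have "sqrt (sqnorm_A A x + sqnorm_A A y) ^ 4 = (sqnorm_A A x + sqnorm_A A y)\<^sup>2" for x y
    using sqnorm_A_nonneg[OF assms] by (simp add: real_sqrt_power_even add_nonneg_nonneg)
  ultimately show ?thesis
    unfolding dw_A0_def dw_gen_def setcompr_eq_image
    by (intro arg_cong[where f = Sup] image_cong)
      (simp_all add: dw_value_diag_def sum_cinner_def A0_def diag_op_def)
qed

lemma dw_value_scaleR:
  assumes A: "linear A" and S: "linear S"
  shows "dw_value A S (r *\<^sub>R z) = r\<^sup>2 * dw_value A S z"
proof -
  have "cinner (A (S (r *\<^sub>R z))) (r *\<^sub>R z) = of_real (r\<^sup>2) * cinner (A (S z)) z"
    by (simp add: linear_scale[OF A] linear_scale[OF S] cinner.scaleR_left cinner.scaleR_right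
        power2_eq_square)
  moreover have "sqnorm_A A (S (r *\<^sub>R z)) = r\<^sup>2 * sqnorm_A A (S z)"
    by (simp add: linear_scale[OF S] sqnorm_A_scaleR[OF A])
  ultimately have "dw_value A S (r *\<^sub>R z)
      = sqrt ((r\<^sup>2)\<^sup>2 * ((cmod (cinner (A (S z)) z))\<^sup>2 + (sqnorm_A A (S z))\<^sup>2))"
    unfolding dw_value_def by (simp add: norm_mult norm_power power_mult_distrib distrib_left)
  also have "\<dots> = r\<^sup>2 * dw_value A S z"
    by (simp only: real_sqrt_mult real_sqrt_abs abs_power2 dw_value_def)
  finally show ?thesis .
qed

lemma bdd_above_dw_value:
  assumes A: "positive_op A" and S: "B_A A S"
  shows "bdd_above (dw_value A S ` {z. sqnorm_A A z = 1})"
proof -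
  obtain c where c: "c \<ge> 0" "\<And>x. sqnorm_A A (S x) \<le> c * sqnorm_A A x"
    using B_A_sqnorm_A_bounded[OF A S] by blast
  have "dw_value A S z \<le> sqrt (c + c\<^sup>2)" if z: "sqnorm_A A z = 1" for z
  proof -
    have "(cmod (cinner (A (S z)) z))\<^sup>2 \<le> sqnorm_A A (S z) * sqnorm_A A z"
      by (rule cinner_A_cauchy_schwarz[OF A])
    also have "\<dots> \<le> c" using c(2)[of z] z by simp
    finally have "(cmod (cinner (A (S z)) z))\<^sup>2 \<le> c" .
    moreover have "(sqnorm_A A (S z))\<^sup>2 \<le> c\<^sup>2"
      using c(2)[of z] z sqnorm_A_nonneg[OF A, of "S z"] by (intro power_mono) auto
    ultimately show ?thesis unfolding dw_value_def by simp
  qed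
  then show ?thesis by (intro bdd_aboveI2) auto
qed

lemma dw_value_le_dw_A:
  assumes A: "positive_op A" and S: "B_A A S" and "sqnorm_A A z = 1"
  shows "dw_value A S z \<le> dw_A A S"
  unfolding dw_A_eq_Sup_dw_value[OF A]
  using bdd_above_dw_value[OF A S] assms(3) by (intro cSup_upper) auto

lemma dw_value_le_sqnorm_A_mult_dw_A:
  assumes A: "positive_op A" and S: "B_A A S"
  shows "dw_value A S x \<le> sqnorm_A A x * dw_A A S"
proof (cases "sqnorm_A A x = 0")
  case True
  obtain c where "c \<ge> 0" "\<And>x. sqnorm_A A (S x) \<le> c * sqnorm_A A x"
    using B_A_sqnorm_A_bounded[OF A S] by blast
  then have "sqnorm_A A (S x) \<le> 0" using True by (metis mult_zero_right)
  then have "sqnorm_A A (S x) = 0" using sqnorm_A_nonneg[OF A, of "S x"] by simp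
  moreover have "cinner (A (S x)) x = 0" using cinner_A_cauchy_schwarz[OF A, of "S x" x] True by simp
  ultimately show ?thesis by (simp add: dw_value_def True)
next
  case False
  define u where "u = (1 / sqrt (sqnorm_A A x)) *\<^sub>R x"
  have x: "x = sqrt (sqnorm_A A x) *\<^sub>R u" using False by (simp add: u_def)
  have lin: "linear A" "linear S"
    using A S by (simp_all add: bounded_linear.linear positive_op_bounded_linear B_A_bounded_linear)
  have "dw_value A S x = sqnorm_A A x * dw_value A S u"
    by (subst x) (simp add: dw_value_scaleR[OF lin] sqnorm_A_nonneg[OF A])
  also have "\<dots> \<le> sqnorm_A A x * dw_A A S"
    using dw_value_le_dw_A[OF A S sqnorm_A_normalize[OF A False, folded u_def]]
      sqnorm_A_nonneg[OF A] by (simp add: mult_left_mono)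
  finally show ?thesis .
qed

lemma dw_value_diag_le: "dw_value_diag A S T p \<le> dw_value A S (fst p) + dw_value A T (snd p)"
proof -
  define P Q where "P = cinner (A (S (fst p))) (fst p)" and "Q = cinner (A (T (snd p))) (snd p)"
  have "(cmod (P + Q))\<^sup>2 \<le> (cmod P + cmod Q)\<^sup>2"
    by (intro power_mono norm_triangle_ineq) simp
  then have "dw_value_diag A S T p
      \<le> cmod (Complex (cmod P) (sqnorm_A A (S (fst p))) + Complex (cmod Q) (sqnorm_A A (T (snd p))))"
    by (simp add: dw_value_diag_def P_def Q_def cmod_def)
  also have "\<dots> \<le> cmod (Complex (cmod P) (sqnorm_A A (S (fst p))))
      + cmod (Complex (cmod Q) (sqnorm_A A (T (snd p))))"
    by (rule norm_triangle_ineq)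
  also have "\<dots> = dw_value A S (fst p) + dw_value A T (snd p)"
    by (simp add: cmod_def dw_value_def P_def Q_def)
  finally show ?thesis .
qed

lemma dw_value_diag_le_max:
  assumes A: "positive_op A" and S: "B_A A S" and T: "B_A A T"
    and p: "sqnorm_A A (fst p) + sqnorm_A A (snd p) = 1"
  shows "dw_value_diag A S T p \<le> max (dw_A A S) (dw_A A T)"
proof -
  have "dw_value_diag A S T p \<le> dw_value A S (fst p) + dw_value A T (snd p)"
    by (rule dw_value_diag_le)
  also have "\<dots> \<le> sqnorm_A A (fst p) * dw_A A S + sqnorm_A A (snd p) * dw_A A T"
    by (intro add_mono dw_value_le_sqnorm_A_mult_dw_A A S T)
  also have "\<dots> \<le> sqnorm_A A (fst p) * max (dw_A A S) (dw_A A T)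
      + sqnorm_A A (snd p) * max (dw_A A S) (dw_A A T)"
    by (intro add_mono mult_left_mono) (simp_all add: sqnorm_A_nonneg[OF A])
  also have "\<dots> = max (dw_A A S) (dw_A A T)" using p by (simp flip: distrib_right)
  finally show ?thesis .
qed

lemma dw_value_diag_Pair_zero: "linear T \<Longrightarrow> dw_value_diag A S T (z, 0) = dw_value A S z"
  by (simp add: dw_value_diag_def dw_value_def sqnorm_A_def linear_0)

lemma dw_value_diag_zero_Pair: "linear S \<Longrightarrow> dw_value_diag A S T (0, z) = dw_value A T z"
  by (simp add: dw_value_diag_def dw_value_def sqnorm_A_def linear_0)

lemma dw_A0_diag_le_max:
  assumes A: "positive_op A" and S: "B_A A S" and T: "B_A A T" and unit: "sqnorm_A A z = 1"
  shows "dw_A0 A (diag_op S T) \<le> max (dw_A A S) (dw_A A T)"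
  unfolding dw_A0_diag_eq_Sup_dw_value_diag[OF A]
proof (rule cSup_least)
  have "(z, 0) \<in> {p. sqnorm_A A (fst p) + sqnorm_A A (snd p) = 1}"
    using unit by (simp add: sqnorm_A_def)
  then show "dw_value_diag A S T ` {p. sqnorm_A A (fst p) + sqnorm_A A (snd p) = 1} \<noteq> {}"
    by blast
qed (auto intro: dw_value_diag_le_max[OF A S T])

lemma dw_A_le_dw_A0_diag:
  assumes A: "positive_op A" and S: "B_A A S" and T: "B_A A T" and unit: "sqnorm_A A z = 1"
  shows "dw_A A S \<le> dw_A0 A (diag_op S T)" and "dw_A A T \<le> dw_A0 A (diag_op S T)"
proof -
  let ?D = "{p. sqnorm_A A (fst p) + sqnorm_A A (snd p) = 1}"
  have bdd: "bdd_above (dw_value_diag A S T ` ?D)"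
    by (rule bdd_aboveI2) (use dw_value_diag_le_max[OF A S T] in blast)
  have lin: "linear S" "linear T"
    using S T by (simp_all add: bounded_linear.linear B_A_bounded_linear)
  have ne: "dw_value A R ` {z. sqnorm_A A z = 1} \<noteq> {}" for R using unit by blast
  show "dw_A A S \<le> dw_A0 A (diag_op S T)"
    unfolding dw_A_eq_Sup_dw_value[OF A] dw_A0_diag_eq_Sup_dw_value_diag[OF A]
  proof (rule cSup_mono[OF ne bdd])
    fix b assume "b \<in> dw_value A S ` {z. sqnorm_A A z = 1}"
    then obtain x where x: "sqnorm_A A x = 1" "b = dw_value A S x" by blast
    then have "(x, 0) \<in> ?D" by (simp add: sqnorm_A_def)
    moreover have "b = dw_value_diag A S T (x, 0)" using x(2) by (simp add: dw_value_diag_Pair_zero[OF lin(2)])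
    ultimately show "\<exists>a\<in>dw_value_diag A S T ` ?D. b \<le> a" by blast
  qed
  show "dw_A A T \<le> dw_A0 A (diag_op S T)"
    unfolding dw_A_eq_Sup_dw_value[OF A] dw_A0_diag_eq_Sup_dw_value_diag[OF A]
  proof (rule cSup_mono[OF ne bdd])
    fix b assume "b \<in> dw_value A T ` {z. sqnorm_A A z = 1}"
    then obtain x where x: "sqnorm_A A x = 1" "b = dw_value A T x" by blast
    then have "(0, x) \<in> ?D" by (simp add: sqnorm_A_def)
    moreover have "b = dw_value_diag A S T (0, x)" using x(2) by (simp add: dw_value_diag_zero_Pair[OF lin(1)])
    ultimately show "\<exists>a\<in>dw_value_diag A S T ` ?D. b \<le> a" by blast
  qed
qed

theorem proposition3p4:
  fixes A S T :: "'a::complex_hilbert \<Rightarrow> 'a"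
  assumes "positive_op A"
    and "B_A A S"
    and "B_A A T"
  shows "dw_A0 A (diag_op S T) = max (dw_A A S) (dw_A A T)"
proof (cases "\<exists>z. sqnorm_A A z = 1")
  case True
  then obtain z where "sqnorm_A A z = 1" by blast
  from dw_A0_diag_le_max[OF assms this] dw_A_le_dw_A0_diag[OF assms this]
  show ?thesis by (simp add: antisym)
next
  case False
  then have "sqnorm_A A z = 0" for z using sqnorm_A_normalize[OF assms(1)] by blast
  then show ?thesis
    by (simp add: dw_A_eq_Sup_dw_value[OF assms(1)] dw_A0_diag_eq_Sup_dw_value_diag[OF assms(1)])
qed

end
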